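(* Let $p$ be an odd prime, $\alpha_r=\frac{(1/2)_r}{r!}$ for $r\ge0$ (where $(x)_r=x(x+1)\cdots(x+r-1)$), and $\gamma=(4^{p-1}-1)/p$. Let $r,r',t$ be integers $\ge0$ with $r=pr'+t$ and $t<p$. If $t>p/2$, then $p$ divides $\alpha_r$. If $t<p/2$, then $$\alpha_r\equiv\alpha_{r'}\alpha_t\left(1-\gamma p r'+2pr'\sum_{j=1}^{2t}\frac{(-1)^{j-1}}{j}\right)\pmod{p^2}.$$
   Context: Divisibility and congruences are in the ring $\mathbb{Z}_{(p)}$ of $p$-integral rationals. *)

theory Defs
  imports Complex_Main "HOL-Computational_Algebra.Primes"
begin

definition alpha :: "nat \<Rightarrow> rat" where
  "alpha r = pochhammer (1/2) r / fact r"

text \<open>A rational x is p-integral (lies in Z_(p)) iff its reduced denominator is not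
divisible by p.\<close>
definition p_integral :: "nat \<Rightarrow> rat \<Rightarrow> bool" where
  "p_integral p x \<longleftrightarrow> \<not> (int p dvd snd (quotient_of x))"

definition pdvd :: "nat \<Rightarrow> rat \<Rightarrow> rat \<Rightarrow> bool" where
  "pdvd p a b \<longleftrightarrow> (\<exists>c. p_integral p c \<and> b = a * c)"

definition pcong :: "nat \<Rightarrow> rat \<Rightarrow> rat \<Rightarrow> rat \<Rightarrow> bool" where
  "pcong p a b m \<longleftrightarrow> p_integral p a \<and> p_integral p b \<and> pdvd p m (a - b)"

end

theory Submission
  imports Defs "HOL-Number_Theory.Number_Theory"
begin

(*
  Write alpha n as the product of the ratios (2k + 1)/(2k + 2), k < n, and group the factors with
  k = p m + i, i < p, into blocks. In the block of m, the two factors divisible by p, p (2m + 1) and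
  p (2m + 2), leave (2m + 1)/(2m + 2); the remaining numerators and denominators pair up as
  (2pm + a)(2pm + 2p - a), which is a (2p - a) modulo p^2. So the p-adic unit block_ratio p m is
  congruent to block_ratio p 0 = 2 binom(2p, p) / 4^p, which is 1 - p gamma modulo p^2 since
  binom(2p, p) = 2 mod p^2 and 4^(p - 1) = 1 + p gamma. Hence
    alpha (p r' + t) = alpha r' * prod_{m < r'} block_ratio p m * prod_{i < t} alpha_ratio (p r' + i).
  If 2t > p, the last product contains the factor with numerator p (2r' + 1), all other factors
  being units. If 2t < p, all its factors are units and
  (a + 2pr')/(b + 2pr') = (a/b)(1 + 2pr' (1/a - 1/b)) mod p^2; multiplying these first-order
  expansions produces the alternating sum.
*)

definition alpha_ratio :: "nat \<Rightarrow> rat" where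
  "alpha_ratio k = (2 * of_nat k + 1) / (2 * of_nat k + 2)"

lemma alpha_eq_prod: "alpha n = (\<Prod>k<n. alpha_ratio k)"
proof (induct n)
  case 0
  then show ?case by (simp add: alpha_def)
next
  case (Suc n)
  have "alpha (Suc n) = alpha n * alpha_ratio n"
    by (simp add: alpha_def alpha_ratio_def pochhammer_Suc field_simps)
  with Suc show ?case by simp
qed

lemma alpha_eq_central_binomial: "alpha n = of_nat ((2 * n) choose n) / 4 ^ n"
proof -
  have "fact n * fact n * ((2 * n) choose n) = fact (2 * n)"
    using binomial_fact_lemma[of n "2 * n"] by simp
  then have "fact n * fact n * of_nat ((2 * n) choose n) = (fact (2 * n) :: rat)"
    by (metis of_nat_fact of_nat_mult)
  also have "\<dots> = 4 ^ n * pochhammer (1 / 2) n * fact n"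
    unfolding fact_double by (simp add: power_mult)
  finally have "fact n * of_nat ((2 * n) choose n) = (4 ^ n * pochhammer (1 / 2) n :: rat)"
    by (simp add: mult_ac)
  then show ?thesis
    unfolding alpha_def by (simp add: divide_simps mult_ac)
qed

lemma prod_lessThan_mirror_even:
  "(\<Prod>i<2 * h. F i) = (\<Prod>i<h. F i * F (2 * h - Suc i))" for h :: nat
proof -
  have "(\<Prod>i<2 * h. F i) = (\<Prod>i<h. F i) * (\<Prod>i\<in>{h..<2 * h}. F i)"
    by (simp add: prod.atLeastLessThan_concat flip: atLeast0LessThan)
  also have "(\<Prod>i\<in>{h..<2 * h}. F i) = (\<Prod>i<h. F (2 * h - Suc i))"
    by (rule prod.reindex_bij_witness[where i="\<lambda>i. 2 * h - Suc i" and j="\<lambda>i. 2 * h - Suc i"]) auto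
  finally show ?thesis
    by (simp add: prod.distrib)
qed

lemma prod_lessThan_mirror_odd:
  "(\<Prod>i<2 * h + 1. F i) = F h * (\<Prod>i<h. F i * F (2 * h - i))" for h :: nat
proof -
  have "(\<Prod>i<2 * h + 1. F i) = (\<Prod>i<Suc h. F i) * (\<Prod>i\<in>{Suc h..<2 * h + 1}. F i)"
    using prod.atLeastLessThan_concat[of 0 "Suc h" "2 * h + 1" F] by (simp add: atLeast0LessThan)
  also have "(\<Prod>i\<in>{Suc h..<2 * h + 1}. F i) = (\<Prod>i<h. F (2 * h - i))"
    by (rule prod.reindex_bij_witness[where i="\<lambda>i. 2 * h - i" and j="\<lambda>i. 2 * h - i"]) auto
  also have "(\<Prod>i<Suc h. F i) = F h * (\<Prod>i<h. F i)"
    by (simp add: mult.commute)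
  finally show ?thesis
    by (simp only: prod.distrib mult.assoc)
qed

definition mirror_pair :: "nat \<Rightarrow> nat \<Rightarrow> int \<Rightarrow> int" where
  "mirror_pair p m a = (2 * int p * int m + a) * (2 * int p * int m + 2 * int p - a)"

definition block_ratio :: "nat \<Rightarrow> nat \<Rightarrow> rat" where
  "block_ratio p m =
    (\<Prod>i<p div 2. of_int (mirror_pair p m (2 * int i + 1)) / of_int (mirror_pair p m (2 * int i + 2)))"

lemma mirror_pair_cong: "[mirror_pair p m a = mirror_pair p 0 a] (mod (int p)^2)"
proof -
  have "mirror_pair p m a = mirror_pair p 0 a + (int p)^2 * (4 * int m + 4 * (int m)^2)"
    by (simp add: mirror_pair_def algebra_simps power2_eq_square)
  then show ?thesis
    by (simp add: cong_def)
qed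

lemma prod_alpha_ratio_block:
  assumes "odd p"
  shows "(\<Prod>i<p. alpha_ratio (p * m + i)) = alpha_ratio m * block_ratio p m"
proof -
  define h where "h = p div 2"
  have p: "p = 2 * h + 1" using assms unfolding h_def by presburger
  define N where "N i = 2 * of_nat (p * m + i) + (1 :: rat)" for i
  define D where "D i = 2 * of_nat (p * m + i) + (2 :: rat)" for i
  define X where "X = (\<Prod>i<h. of_int (mirror_pair p m (2 * int i + 1)) :: rat)"
  define Y where "Y = (\<Prod>i<h. of_int (mirror_pair p m (2 * int i + 2)) :: rat)"
  have "(\<Prod>i<p. N i) = of_nat p * (2 * of_nat m + 1) * X"
    unfolding p prod_lessThan_mirror_odd X_def
    by (intro arg_cong2[where f="(*)"] prod.cong) (auto simp: N_def mirror_pair_def p algebra_simps)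
  moreover have "(\<Prod>i<p. D i) = (\<Prod>i<2 * h. D i) * D (2 * h)"
    unfolding p by simp
  then have "(\<Prod>i<p. D i) = Y * (of_nat p * (2 * of_nat m + 2))"
    unfolding prod_lessThan_mirror_even Y_def
    by (simp only:, intro arg_cong2[where f="(*)"] prod.cong) (auto simp: D_def mirror_pair_def p algebra_simps)
  ultimately have "(\<Prod>i<p. alpha_ratio (p * m + i)) =
      (of_nat p * ((2 * of_nat m + 1) * X)) / (of_nat p * ((2 * of_nat m + 2) * Y))"
    unfolding alpha_ratio_def N_def[symmetric] D_def[symmetric] prod_dividef by (simp only: ac_simps)
  also have "\<dots> = (2 * of_nat m + 1) / (2 * of_nat m + 2) * (X / Y)"
    using p by (simp only: mult_divide_mult_cancel_left of_nat_eq_0_iff times_divide_times_eq)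
  also have "X / Y = block_ratio p m"
    unfolding block_ratio_def X_def Y_def h_def prod_dividef ..
  finally show ?thesis
    by (simp only: alpha_ratio_def)
qed

lemma alpha_mult_add:
  assumes "odd p"
  shows "alpha (p * r + t) = alpha r * (\<Prod>m<r. block_ratio p m) * (\<Prod>i<t. alpha_ratio (p * r + i))"
proof -
  have "(\<Prod>k<p * r. alpha_ratio k) = (\<Prod>m<r. \<Prod>i<p. alpha_ratio (p * m + i))"
    using prod.nat_group[of "\<lambda>k. alpha_ratio k" p r]
    by (simp add: prod.atLeastLessThan_shift_0 comp_def mult.commute atLeast0LessThan)
  also have "\<dots> = alpha r * (\<Prod>m<r. block_ratio p m)"
    by (simp add: prod_alpha_ratio_block[OF assms] prod.distrib alpha_eq_prod)
  moreover have "(\<Prod>k<p * r + t. alpha_ratio k) = (\<Prod>k<p * r. alpha_ratio k) * (\<Prod>i<t. alpha_ratio (p * r + i))"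
    using prod.atLeastLessThan_concat[of 0 "p * r" "p * r + t" alpha_ratio]
    by (simp add: atLeast0LessThan prod.atLeastLessThan_shift_0 comp_def)
  ultimately show ?thesis
    unfolding alpha_eq_prod by simp
qed

lemma alternating_harmonic_sum_pairs:
  "(\<Sum>j = 1..2 * t. (-1) ^ (j - 1) / of_nat j :: 'a :: field) =
    (\<Sum>i<t. 1 / (2 * of_nat i + 1) - 1 / (2 * of_nat i + 2))"
proof (induct t)
  case (Suc t)
  have "2 * Suc t = Suc (Suc (2 * t))" by simp
  then show ?case
    using Suc by (simp add: sum.cl_ivl_Suc add_ac)
qed simp

lemma shifted_fraction_expansion:
  fixes a b c q :: "'a :: field"
  assumes "a \<noteq> 0" "b \<noteq> 0" "b + q * c \<noteq> 0"
  shows "(a + q * c) / (b + q * c) =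
    a / b * (1 + q * (c * (1 / a - 1 / b))) + q^2 * (c^2 * (a - b) / (b^2 * (b + q * c)))"
  using assms by (simp add: divide_simps) (simp add: algebra_simps power2_eq_square)

lemma p_integral_iff:
  "p_integral p x \<longleftrightarrow> (\<exists>a b. \<not> int p dvd b \<and> x = of_int a / of_int b)"
proof
  assume "p_integral p x"
  then show "\<exists>a b. \<not> int p dvd b \<and> x = of_int a / of_int b"
    unfolding p_integral_def by (metis prod.collapse quotient_of_div)
next
  assume "\<exists>a b. \<not> int p dvd b \<and> x = of_int a / of_int b"
  then obtain a b where ab: "\<not> int p dvd b" "x = of_int a / of_int b" by blast
  obtain a' b' where q: "quotient_of x = (a', b')" by (cases "quotient_of x")
  have "b \<noteq> 0" "b' > 0" using ab q quotient_of_denom_pos by auto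
  moreover have "x = of_int a' / of_int b'" using q quotient_of_div by blast
  ultimately have "a' * b = a * b'"
    using ab by (simp add: field_simps flip: of_int_mult of_int_eq_iff)
  then have "b' dvd b"
    using q quotient_of_coprime by (metis coprime_commute coprime_dvd_mult_right_iff dvd_triv_right)
  then show "p_integral p x" unfolding p_integral_def q using ab dvd_trans by auto
qed

lemma p_integral_of_int_divide: "\<not> int p dvd b \<Longrightarrow> p_integral p (of_int a / of_int b)"
  using p_integral_iff by blast

lemma pcongE:
  assumes "pcong p x y m"
  obtains e where "p_integral p e" "x = y + m * e"
  using assms unfolding pcong_def pdvd_def by (metis add.commute diff_add_cancel)

context
  fixes p :: nat
  assumes prime: "prime p"
begin

lemma prime_int: "prime (int p)"
  using prime by simp

lemma not_dvd_mult: "\<not> int p dvd a \<Longrightarrow> \<not> int p dvd b \<Longrightarrow> \<not> int p dvd (a * b)"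
  using prime_int by (simp add: prime_dvd_mult_iff)

lemma p_integral_of_int [simp]: "p_integral p (of_int a)"
proof -
  have "\<not> int p dvd 1" using prime_int not_prime_unit by blast
  then show ?thesis using p_integral_of_int_divide[of p 1 a] by simp
qed

lemma p_integral_of_nat [simp]: "p_integral p (of_nat n)"
  using p_integral_of_int[of "int n"] by simp

lemma p_integral_numeral [simp]: "p_integral p (numeral n)"
  using p_integral_of_nat[of "numeral n"] by simp

lemma p_integral_0 [simp]: "p_integral p 0" and p_integral_1 [simp]: "p_integral p 1"
  using p_integral_of_int[of 0] p_integral_of_int[of 1] by simp_all

lemma p_integral_add [intro]:
  assumes "p_integral p x" "p_integral p y"
  shows "p_integral p (x + y)"
proof -
  obtain a b c d where bd: "\<not> int p dvd b" "\<not> int p dvd d"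
    and xy: "x = of_int a / of_int b" "y = of_int c / of_int d"
    using assms p_integral_iff by metis
  from bd have "b \<noteq> 0" "d \<noteq> 0" by auto
  then have "x + y = of_int (a * d + b * c) / of_int (b * d)"
    unfolding xy by (simp add: field_simps)
  then show ?thesis
    by (simp only: p_integral_of_int_divide[OF not_dvd_mult[OF bd]])
qed

lemma p_integral_mult [intro]:
  assumes "p_integral p x" "p_integral p y"
  shows "p_integral p (x * y)"
proof -
  obtain a b c d where "\<not> int p dvd b" "\<not> int p dvd d"
    and "x = of_int a / of_int b" "y = of_int c / of_int d"
    using assms p_integral_iff by metis
  then show ?thesis
    using p_integral_of_int_divide[OF not_dvd_mult, of b d "a * c"] by simp
qed

lemma p_integral_uminus [intro]: "p_integral p x \<Longrightarrow> p_integral p (- x)"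
  using p_integral_mult[of "-1" x] p_integral_of_int[of "-1"] by simp

lemma p_integral_diff [intro]: "p_integral p x \<Longrightarrow> p_integral p y \<Longrightarrow> p_integral p (x - y)"
  using p_integral_add[of x "- y"] by auto

lemma p_integral_sum [intro]: "(\<And>i. i \<in> A \<Longrightarrow> p_integral p (f i)) \<Longrightarrow> p_integral p (sum f A)"
  by (induct A rule: infinite_finite_induct) auto

lemma p_integral_prod [intro]: "(\<And>i. i \<in> A \<Longrightarrow> p_integral p (f i)) \<Longrightarrow> p_integral p (prod f A)"
  by (induct A rule: infinite_finite_induct) auto

lemma p_integral_power [intro]: "p_integral p x \<Longrightarrow> p_integral p (x ^ n)"
  by (induct n) auto

lemma pcongI:
  assumes "p_integral p y" "p_integral p m" "p_integral p e" "x = y + m * e"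
  shows "pcong p x y m"
  using assms unfolding pcong_def pdvd_def by auto

lemma pcong_refl: "p_integral p x \<Longrightarrow> pcong p x x m"
  unfolding pcong_def pdvd_def by (auto intro: exI[of _ 0])

lemma pcong_trans:
  assumes "pcong p x y m" "pcong p y z m"
  shows "pcong p x z m"
proof -
  obtain e e' where "p_integral p e" "x = y + m * e" "p_integral p e'" "y = z + m * e'"
    using assms by (metis pcongE)
  then show ?thesis
    using assms unfolding pcong_def pdvd_def by (auto intro!: exI[of _ "e + e'"] simp: algebra_simps)
qed

lemma pcong_mult:
  assumes "pcong p x y m" "pcong p u v m"
  shows "pcong p (x * u) (y * v) m"
proof -
  obtain e e' where "p_integral p e" "x = y + m * e" "p_integral p e'" "u = v + m * e'"
    using assms by (metis pcongE)
  then have "x * u - y * v = m * (x * e' + v * e)"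
    by (simp add: algebra_simps)
  moreover have "p_integral p x" "p_integral p y" "p_integral p u" "p_integral p v"
    using assms unfolding pcong_def by auto
  ultimately show ?thesis
    using \<open>p_integral p e\<close> \<open>p_integral p e'\<close> unfolding pcong_def pdvd_def
    by (intro conjI p_integral_mult exI[of _ "x * e' + v * e"] p_integral_add) auto
qed

lemma pcong_prod:
  "(\<And>i. i \<in> A \<Longrightarrow> pcong p (f i) (g i) m) \<Longrightarrow> pcong p (prod f A) (prod g A) m"
  by (induct A rule: infinite_finite_induct) (auto intro: pcong_refl pcong_mult)

lemma pcong_of_int_divide:
  assumes "[a = a'] (mod n)" "[b = b'] (mod n)" "\<not> int p dvd b" "\<not> int p dvd b'"
  shows "pcong p (of_int a / of_int b) (of_int a' / of_int b') (of_int n)"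
proof -
  have "[a * b' = a' * b] (mod n)"
    using assms(1,2) by (metis cong_mult cong_sym mult.commute)
  then obtain k where k: "a * b' - a' * b = n * k"
    by (metis cong_iff_dvd_diff dvdE)
  have "b \<noteq> 0" "b' \<noteq> 0" using assms by auto
  then have "of_int a / of_int b - of_int a' / of_int b' = (of_int (a * b' - a' * b) :: rat) / of_int (b * b')"
    by (simp add: field_simps)
  then have eq: "of_int a / of_int b = of_int a' / of_int b' + of_int n * (of_int k / of_int (b * b') :: rat)"
    unfolding k by simp
  show ?thesis
    using p_integral_of_int_divide[OF not_dvd_mult[OF assms(3,4)], of k]
    by (intro pcongI[OF _ _ _ eq]) (simp_all add: assms p_integral_of_int_divide)
qed

lemma pcong_mult_linear:
  assumes "pcong p u (v * (1 + of_nat p * w)) ((of_nat p)^2)"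
    and "pcong p u' (v' * (1 + of_nat p * w')) ((of_nat p)^2)"
    and "p_integral p v" "p_integral p w" "p_integral p v'" "p_integral p w'"
  shows "pcong p (u * u') (v * v' * (1 + of_nat p * (w + w'))) ((of_nat p)^2)"
proof -
  have eq: "v * (1 + of_nat p * w) * (v' * (1 + of_nat p * w')) =
      v * v' * (1 + of_nat p * (w + w')) + (of_nat p)^2 * (v * v' * w * w')"
    by (simp add: algebra_simps power2_eq_square)
  then have "pcong p (v * (1 + of_nat p * w) * (v' * (1 + of_nat p * w')))
      (v * v' * (1 + of_nat p * (w + w'))) ((of_nat p)^2)"
    using assms(3-) by (intro pcongI[OF _ _ _ eq] p_integral_mult p_integral_add p_integral_power) auto
  with pcong_mult[OF assms(1,2)] show ?thesis by (rule pcong_trans)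
qed

lemma pcong_prod_linear:
  assumes "\<And>i. i \<in> A \<Longrightarrow> pcong p (u i) (v i * (1 + of_nat p * w i)) ((of_nat p)^2)"
    and "\<And>i. i \<in> A \<Longrightarrow> p_integral p (v i) \<and> p_integral p (w i)"
  shows "pcong p (prod u A) (prod v A * (1 + of_nat p * sum w A)) ((of_nat p)^2)"
  using assms
proof (induct A rule: infinite_finite_induct)
  case (insert i A)
  then show ?case
    using pcong_mult_linear[of "u i" "v i" "w i" "prod u A" "prod v A" "sum w A"] by auto
qed (auto intro: pcong_refl)

lemma pcong_shifted_fraction:
  assumes "\<not> int p dvd a" "\<not> int p dvd b"
  shows "pcong p (of_int (a + int p * c) / of_int (b + int p * c))
    (of_int a / of_int b * (1 + of_nat p * (of_int c * (1 / of_int a - 1 / of_int b)))) ((of_nat p)^2)"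
proof -
  have b': "\<not> int p dvd b + int p * c"
    using assms(2) by (simp add: dvd_add_left_iff)
  then have "(of_int b + of_nat p * of_int c :: rat) \<noteq> 0"
    by (metis dvd_0_right of_int_0_eq_iff of_int_add of_int_mult of_int_of_nat_eq)
  moreover have "(of_int a :: rat) \<noteq> 0" "(of_int b :: rat) \<noteq> 0"
    using assms by auto
  ultimately have eq: "of_int (a + int p * c) / of_int (b + int p * c) =
      of_int a / of_int b * (1 + of_nat p * (of_int c * (1 / of_int a - 1 / of_int b))) +
      (of_nat p)^2 * (of_int (c^2 * (a - b)) / of_int (b^2 * (b + int p * c)) :: rat)"
    using shifted_fraction_expansion[of "of_int a :: rat" "of_int b" "of_nat p" "of_int c"] by simp
  have "\<not> int p dvd b^2 * (b + int p * c)"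
    using not_dvd_mult[OF not_dvd_mult[OF assms(2,2)] b'] by (simp add: power2_eq_square)
  moreover have "p_integral p (1 / of_int a)" "p_integral p (1 / of_int b)"
    using p_integral_of_int_divide[of p _ 1] assms by simp_all
  ultimately show ?thesis
    using assms
    by (intro pcongI[OF _ _ _ eq] p_integral_mult p_integral_add p_integral_diff p_integral_of_int_divide) auto
qed

lemma p_integral_alternating_sum:
  assumes "n < p"
  shows "p_integral p (\<Sum>j = 1..n. (-1) ^ (j - 1) / of_nat j)"
proof (rule p_integral_sum)
  fix j assume "j \<in> {1..n}"
  then have "\<not> int p dvd int j"
    using assms by (auto dest: dvd_imp_le)
  then show "p_integral p ((-1) ^ (j - 1) / of_nat j)"
    using p_integral_of_int_divide[of p "int j" "(-1) ^ (j - 1)"] by simp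
qed

lemma central_binomial_cong: "[(2 * p) choose p = 2] (mod p^2)"
proof -
  obtain n where n: "p = Suc n" using prime by (cases p) auto
  have "(2 * p) choose p = (\<Sum>k\<le>p. (p choose k)^2)"
    by (rule choose_square_sum[symmetric])
  also have "\<dots> = (\<Sum>k<n. (p choose Suc k)^2) + 2"
    unfolding n sum.atMost_Suc_shift by (simp add: lessThan_Suc_atMost[symmetric] n)
  finally have eq: "(2 * p) choose p = (\<Sum>k<n. (p choose Suc k)^2) + 2" .
  have "p^2 dvd (\<Sum>k<n. (p choose Suc k)^2)"
    using prime n by (intro dvd_sum dvd_power_same dvd_choose_prime) auto
  then show ?thesis
    unfolding eq by (subst cong_altdef_nat) auto
qed

context
  assumes odd: "odd p"
begin

lemma not_dvd_two: "\<not> int p dvd 2"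
proof
  assume "int p dvd 2"
  then have "p dvd 2"
    by (metis of_nat_dvd_iff of_nat_numeral)
  then have "p \<le> 2"
    by (rule dvd_imp_le) simp
  then show False
    using odd prime_ge_2_nat[OF prime] by simp
qed

lemma not_dvd_four_power: "\<not> int p dvd 4 ^ n"
  using not_dvd_two prime_int
  by (metis mult_2 numeral_Bit0 prime_dvd_mult_iff prime_dvd_power)

lemma not_dvd_double: "0 < j \<Longrightarrow> j < int p \<Longrightarrow> \<not> int p dvd 2 * j"
  using not_dvd_two prime_int by (auto simp: prime_dvd_mult_iff zdvd_not_zless)

lemma four_power_fermat:
  obtains c :: int where "4 ^ (p - 1) = 1 + int p * c"
proof -
  have "\<not> p dvd 4"
    using not_dvd_four_power[of 1] by (metis of_nat_dvd_iff of_nat_numeral power_one_right)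
  then have "[4 ^ (p - 1) = 1] (mod p)"
    by (rule fermat_theorem[OF prime])
  then have "[4 ^ (p - 1) = 1] (mod int p)"
    by (metis cong_int_iff of_nat_1 of_nat_numeral of_nat_power)
  then show ?thesis
    using that by (metis cong_iff_lin cong_sym)
qed

lemma p_integral_alpha: "p_integral p (alpha n)"
  using p_integral_of_int_divide[OF not_dvd_four_power, of "int ((2 * n) choose n)"]
  by (simp add: alpha_eq_central_binomial)

lemma p_integral_alpha_ratio:
  assumes "i + 1 < p"
  shows "p_integral p (alpha_ratio (p * r + i))"
proof -
  have "alpha_ratio (p * r + i) = of_int (2 * int (p * r + i) + 1) / of_int (int p * (2 * int r) + 2 * (int i + 1))"
    by (simp add: alpha_ratio_def algebra_simps)
  moreover have "\<not> int p dvd int p * (2 * int r) + 2 * (int i + 1)"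
    using not_dvd_double[of "int i + 1"] assms by (simp add: dvd_add_right_iff)
  ultimately show ?thesis
    by (metis p_integral_of_int_divide)
qed

lemma not_dvd_mirror_pair_even:
  assumes "0 < j" "j < int p"
  shows "\<not> int p dvd mirror_pair p m (2 * j)"
proof -
  have "mirror_pair p m (2 * j) = (int p * (2 * int m) + 2 * j) * (int p * (2 * int m + 2) - 2 * j)"
    by (simp add: mirror_pair_def algebra_simps)
  then show ?thesis
    using not_dvd_double[OF assms] prime_int
    by (simp add: prime_dvd_mult_iff dvd_add_right_iff dvd_diff_right_iff)
qed

lemma block_ratio_cong: "pcong p (block_ratio p m) (block_ratio p 0) ((of_nat p)^2)"
proof -
  have "pcong p (of_int (mirror_pair p m (2 * int i + 1)) / of_int (mirror_pair p m (2 * int i + 2)))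
      (of_int (mirror_pair p 0 (2 * int i + 1)) / of_int (mirror_pair p 0 (2 * int i + 2)))
      (of_int ((int p)^2))" if "i < p div 2" for i
    using that not_dvd_mirror_pair_even[of "int i + 1"]
    by (intro pcong_of_int_divide mirror_pair_cong) (auto simp: algebra_simps)
  then show ?thesis
    unfolding block_ratio_def by (auto intro: pcong_prod)
qed

lemma block_ratio_zero_cong:
  assumes c: "4 ^ (p - 1) = 1 + int p * c"
  shows "pcong p (block_ratio p 0) (1 - of_nat p * of_int c) ((of_nat p)^2)"
proof -
  define d :: int where "d = 2 * 4 ^ (p - 1)"
  have d: "\<not> int p dvd d"
    unfolding d_def using not_dvd_mult[OF not_dvd_two not_dvd_four_power] .
  have "alpha p = block_ratio p 0 / 2"
    using prod_alpha_ratio_block[OF odd, of 0] by (simp add: alpha_eq_prod alpha_ratio_def)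
  moreover have "(4 :: rat) ^ p = 2 * of_int d"
    using prime_gt_0_nat[OF prime] by (simp add: d_def flip: power_Suc)
  ultimately have block: "block_ratio p 0 = of_int (int ((2 * p) choose p)) / of_int d"
    by (simp add: alpha_eq_central_binomial field_simps)
  have "of_int (2 - 2 * (int p)^2 * c^2) = (1 - of_nat p * of_int c) * (of_int d :: rat)"
    unfolding d_def c by (simp add: algebra_simps power2_eq_square)
  then have one: "1 - of_nat p * of_int c = of_int (2 - 2 * (int p)^2 * c^2) / (of_int d :: rat)"
    using d by (auto simp: nonzero_eq_divide_eq)
  have cong: "[int ((2 * p) choose p) = 2 - 2 * (int p)^2 * c^2] (mod (int p)^2)"
  proof (rule cong_trans)
    show "[int ((2 * p) choose p) = 2] (mod (int p)^2)"
      using central_binomial_cong by (metis cong_int_iff of_nat_numeral of_nat_power)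
    show "[2 = 2 - 2 * (int p)^2 * c^2] (mod (int p)^2)"
      by (simp add: cong_iff_dvd_diff)
  qed
  show ?thesis
    using pcong_of_int_divide[OF cong cong_refl d d] unfolding block one by simp
qed

lemma prod_block_ratio_cong:
  assumes c: "4 ^ (p - 1) = 1 + int p * c"
  shows "pcong p (\<Prod>m<r. block_ratio p m) (1 - of_nat p * (of_int c * of_nat r)) ((of_nat p)^2)"
proof -
  have "pcong p (block_ratio p m) (1 * (1 + of_nat p * (- of_int c))) ((of_nat p)^2)" for m
    using pcong_trans[OF block_ratio_cong block_ratio_zero_cong[OF c]] by simp
  then have "pcong p (\<Prod>m<r. block_ratio p m)
      ((\<Prod>m<r. 1) * (1 + of_nat p * (\<Sum>m<r. - of_int c))) ((of_nat p)^2)"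
    by (intro pcong_prod_linear) auto
  then show ?thesis
    by (simp add: mult.commute)
qed

lemma prod_alpha_ratio_shift_cong:
  assumes "2 * t < p"
  shows "pcong p (\<Prod>i<t. alpha_ratio (p * r + i))
    (alpha t * (1 + of_nat p * (2 * of_nat r * (\<Sum>j = 1..2 * t. (-1) ^ (j - 1) / of_nat j))))
    ((of_nat p)^2)"
proof -
  define w where "w i = 2 * of_nat r * (1 / (2 * of_nat i + 1) - 1 / (2 * of_nat i + 2) :: rat)" for i
  have "pcong p (alpha_ratio (p * r + i)) (alpha_ratio i * (1 + of_nat p * w i)) ((of_nat p)^2)
      \<and> p_integral p (alpha_ratio i) \<and> p_integral p (w i)" if "i < t" for i
  proof -
    have ab: "\<not> int p dvd 2 * int i + 1" "\<not> int p dvd 2 * int i + 2"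
      using that assms by (auto simp: zdvd_not_zless)
    have "p_integral p (1 / (2 * of_nat i + 1))" "p_integral p (1 / (2 * of_nat i + 2))"
      using p_integral_of_int_divide[OF ab(1), of 1] p_integral_of_int_divide[OF ab(2), of 1] by simp_all
    then have "p_integral p (w i)"
      unfolding w_def by (intro p_integral_mult p_integral_diff) simp_all
    moreover have "p_integral p (alpha_ratio i)"
      using p_integral_alpha_ratio[of i 0] that assms by simp
    moreover have "pcong p (alpha_ratio (p * r + i)) (alpha_ratio i * (1 + of_nat p * w i)) ((of_nat p)^2)"
      using pcong_shifted_fraction[OF ab, of "2 * int r"]
      by (simp add: alpha_ratio_def w_def algebra_simps)
    ultimately show ?thesis by blast
  qed
  then have "pcong p (\<Prod>i<t. alpha_ratio (p * r + i))
      ((\<Prod>i<t. alpha_ratio i) * (1 + of_nat p * (\<Sum>i<t. w i))) ((of_nat p)^2)"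
    by (intro pcong_prod_linear) auto
  then show ?thesis
    unfolding alternating_harmonic_sum_pairs alpha_eq_prod w_def sum_distrib_left .
qed

lemma pdvd_prod_alpha_ratio_shift:
  assumes "p < 2 * t" "t < p"
  shows "pdvd p (of_nat p) (\<Prod>i<t. alpha_ratio (p * r + i))"
proof -
  define h where "h = p div 2"
  have p: "p = 2 * h + 1" using odd unfolding h_def by presburger
  define F where "F = of_int (2 * int r + 1) / (of_int (int p * (2 * int r + 1) + 1) :: rat)"
  define R where "R = (\<Prod>i\<in>{..<t} - {h}. alpha_ratio (p * r + i))"
  have "h \<in> {..<t}" using assms p by auto
  then have "(\<Prod>i<t. alpha_ratio (p * r + i)) = alpha_ratio (p * r + h) * R"
    unfolding R_def by (simp add: prod.remove)
  also have "alpha_ratio (p * r + h) = of_nat p * F"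
    unfolding F_def by (simp add: alpha_ratio_def p algebra_simps)
  finally have split: "(\<Prod>i<t. alpha_ratio (p * r + i)) = of_nat p * (F * R)"
    by (simp only: mult.assoc)
  have "\<not> int p dvd int p * (2 * int r + 1) + 1"
    using prime_gt_1_nat[OF prime] by (simp add: dvd_add_right_iff)
  then have "p_integral p F"
    unfolding F_def by (rule p_integral_of_int_divide)
  moreover have "p_integral p R"
    unfolding R_def using assms by (intro p_integral_prod p_integral_alpha_ratio) auto
  ultimately show ?thesis
    unfolding pdvd_def split by (blast intro: p_integral_mult)
qed

lemma pdvd_alpha_mult_add:
  assumes "p < 2 * t" "t < p"
  shows "pdvd p (of_nat p) (alpha (p * r + t))"
proof -
  obtain e where "p_integral p e" "(\<Prod>i<t. alpha_ratio (p * r + i)) = of_nat p * e"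
    using pdvd_prod_alpha_ratio_shift[OF assms] unfolding pdvd_def by blast
  moreover have "p_integral p (\<Prod>m<r. block_ratio p m)"
    using block_ratio_cong unfolding pcong_def by blast
  ultimately show ?thesis
    unfolding alpha_mult_add[OF odd] pdvd_def
    by (intro exI[of _ "alpha r * (\<Prod>m<r. block_ratio p m) * e"]) (auto intro: p_integral_alpha)
qed

lemma pcong_alpha_mult_add:
  assumes "2 * t < p" and c: "4 ^ (p - 1) = 1 + int p * c"
  defines "S \<equiv> \<Sum>j = 1..2 * t. (-1) ^ (j - 1) / of_nat j"
  shows "pcong p (alpha (p * r + t))
    (alpha r * alpha t * (1 - of_int c * of_nat p * of_nat r + 2 * of_nat p * of_nat r * S))
    ((of_nat p)^2)"
proof -
  have blocks: "pcong p (\<Prod>m<r. block_ratio p m)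
      (1 * (1 + of_nat p * (- (of_int c * of_nat r)))) ((of_nat p)^2)"
    using prod_block_ratio_cong[OF c] by simp
  have pS: "p_integral p (2 * of_nat r * S)"
    unfolding S_def using assms(1) by (intro p_integral_mult p_integral_alternating_sum) simp_all
  have pc: "p_integral p (- (of_int c * of_nat r))"
    by (rule p_integral_uminus, rule p_integral_mult) simp_all
  have "pcong p (alpha r) (alpha r * (1 + of_nat p * 0)) ((of_nat p)^2)"
    using pcong_refl[OF p_integral_alpha] by simp
  from this blocks have "pcong p (alpha r * (\<Prod>m<r. block_ratio p m))
      (alpha r * 1 * (1 + of_nat p * (0 + - (of_int c * of_nat r)))) ((of_nat p)^2)"
    by (rule pcong_mult_linear) (simp_all add: p_integral_alpha pc)
  moreover have "pcong p (\<Prod>i<t. alpha_ratio (p * r + i)) (alpha t * (1 + of_nat p * (2 * of_nat r * S)))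
      ((of_nat p)^2)"
    unfolding S_def by (rule prod_alpha_ratio_shift_cong[OF assms(1)])
  ultimately have "pcong p (alpha (p * r + t))
      (alpha r * 1 * alpha t * (1 + of_nat p * (0 + - (of_int c * of_nat r) + 2 * of_nat r * S)))
      ((of_nat p)^2)"
    unfolding alpha_mult_add[OF odd]
    by (rule pcong_mult_linear) (use pc pS in \<open>auto intro: p_integral_alpha\<close>)
  then show ?thesis
    by (simp add: algebra_simps)
qed

end

end

theorem lemma2p5:
  fixes p r r' t :: nat
  assumes "prime p" and "odd p"
    and "r = p * r' + t" and "t < p"
  defines "\<gamma> \<equiv> (4 ^ (p - 1) - 1) / (of_nat p :: rat)"
  shows "(2 * t > p \<longrightarrow> pdvd p (of_nat p) (alpha r))
       \<and> (2 * t < p \<longrightarrow>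
           pcong p (alpha r)
             (alpha r' * alpha t *
               (1 - \<gamma> * of_nat p * of_nat r'
                  + 2 * of_nat p * of_nat r' *
                    (\<Sum>j = 1..2 * t. (-1) ^ (j - 1) / of_nat j)))
             ((of_nat p)^2))"
proof -
  obtain c where c: "4 ^ (p - 1) = 1 + int p * c"
    using four_power_fermat[OF assms(1,2)] by blast
  have "(4 :: rat) ^ (p - 1) = 1 + of_nat p * of_int c"
    using arg_cong[OF c, of "of_int :: int \<Rightarrow> rat"] by simp
  then have \<gamma>: "\<gamma> = of_int c"
    unfolding \<gamma>_def using prime_gt_0_nat[OF assms(1)] by simp
  show ?thesis
    unfolding assms(3) \<gamma>
    using pdvd_alpha_mult_add[OF assms(1,2) _ assms(4)] pcong_alpha_mult_add[OF assms(1,2) _ c] by blast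
qed

end
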